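(* Define functions $f_n$ on nonnegative integers $k$ by $f_1(k)=\frac{-1}{(k+1)(k+2)}$ and $$f_{n+1}(k)=-(k+1)f_n(k+2)+(2k+1)f_n(k+1)-kf_n(k)\qquad(n\ge1).$$ Then for every $n\ge2$, $f_n(0)=-\frac{B_n}{n}$, where $B_n$ are the Bernoulli numbers.
   Context: Bernoulli numbers: $\frac{t}{e^t-1}=\sum_{n\ge0}B_n\frac{t^n}{n!}$. *)

theory Defs
  imports Complex_Main "HOL-Computational_Algebra.Formal_Power_Series"
begin

definition bernoulli :: "nat \<Rightarrow> real" where
  "bernoulli n = fact n * fps_nth (fps_X / (fps_exp 1 - 1)) n"

text \<open>f n k; the paper's f_1 is f 1. f 0 is an unused dummy value.\<close>
fun f :: "nat \<Rightarrow> nat \<Rightarrow> real" where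
  "f 0 k = 0"
| "f (Suc 0) k = -1 / ((real k + 1) * (real k + 2))"
| "f (Suc (Suc n)) k =
     - (real k + 1) * f (Suc n) (k + 2) + (2 * real k + 1) * f (Suc n) (k + 1)
     - real k * f (Suc n) k"

end

theory Submission
  imports Defs "HOL-Analysis.Analysis"
begin

text \<open>
  Let D = x^2 (x - 1) d/dx. By induction on n, integration by parts against (1 - x)^k turns
  the recurrence for f into f_{n+1}(k) = \<integral>_0^1 (1 - x)^k (-x (D^n x)') dx, and one more
  integration by parts gives f_{n+2}(0) = \<integral>_0^1 D^{n+1} x dx. The moments
  c_n(k) = \<integral>_0^1 x^k D^n x dx satisfy c_{n+1}(k) = (k + 2) c_n(k + 1) - (k + 3) c_n(k + 2).
  The same recurrence holds for n! times the t^n-coefficients of C_k(t) = \<integral>_0^1 U^k Z U_w dw,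
  where U, Z are explicit series in t with polynomial coefficients in w satisfying the transport
  equation Z_t U_w = Z_w (U_t + U^3 - U^2), U = 0 at w = 0 and U = 1 at w = 1; at t = 0 both
  agree with the moments of x. Finally Z U_w is an exact w-derivative, so that
  C_0(t) = 1/t - 1/(e^t - 1), whose coefficients are the numbers -B_{n+1}/(n+1)!.
\<close>

definition integral01 :: "real poly \<Rightarrow> real" where
  "integral01 p = integral {0..1} (poly p)"

lemma integrable01_poly: "poly p integrable_on {0..1::real}"
  by (intro integrable_continuous_interval continuous_intros)

lemma integral01_add: "integral01 (p + q) = integral01 p + integral01 q"
proof -
  have "poly (p + q) = (\<lambda>x. poly p x + poly q x)" by auto
  then show ?thesis by (simp add: integral01_def integral_add integrable01_poly)
qed

lemma integral01_minus: "integral01 (- p) = - integral01 p"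
proof -
  have "poly (- p) = (\<lambda>x. - poly p x)" by auto
  then show ?thesis by (simp add: integral01_def integral_neg integrable01_poly)
qed

lemma integral01_diff: "integral01 (p - q) = integral01 p - integral01 q"
  using integral01_add[of p "- q"] integral01_minus[of q] by simp

lemma integral01_smult: "integral01 (smult c p) = c * integral01 p"
proof -
  have "poly (smult c p) = (\<lambda>x. c * poly p x)" by auto
  then show ?thesis by (simp add: integral01_def)
qed

lemma integral01_const_mult: "integral01 ([:c:] * p) = c * integral01 p"
  using integral01_smult[of c p] by simp

lemma integral01_pderiv: "integral01 (pderiv p) = poly p 1 - poly p 0"
proof -
  have "(poly p has_vector_derivative poly (pderiv p) x) (at x within {0..1})" for x
    using DERIV_subset[OF poly_DERIV[of p x], of "{0..1}"]
    by (simp add: has_real_derivative_iff_has_vector_derivative)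
  then have "(poly (pderiv p) has_integral poly p 1 - poly p 0) {0..1}"
    by (intro fundamental_theorem_of_calculus) simp_all
  then show ?thesis unfolding integral01_def by (rule integral_unique)
qed

lemma integral01_by_parts:
  "integral01 (p * pderiv q) = poly (p * q) 1 - poly (p * q) 0 - integral01 (pderiv p * q)"
  using integral01_pderiv[of "p * q"]
  by (simp add: pderiv_mult integral01_add mult.commute)

definition xpoly :: "real poly" where "xpoly = [:0, 1:]"
definition ypoly :: "real poly" where "ypoly = 1 - xpoly"

lemma poly_xpoly [simp]: "poly xpoly x = x" by (simp add: xpoly_def)
lemma poly_ypoly [simp]: "poly ypoly x = 1 - x" by (simp add: ypoly_def)
lemma pderiv_xpoly [simp]: "pderiv xpoly = 1" by (simp add: xpoly_def pderiv_pCons)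
lemma pderiv_ypoly [simp]: "pderiv ypoly = -1" by (simp add: ypoly_def pderiv_diff)

lemma pderiv_xpoly_power_Suc: "pderiv (xpoly ^ Suc m) = [:real (Suc m):] * xpoly ^ m"
  by (simp del: power_Suc add: pderiv_power_Suc)

lemma pderiv_ypoly_power_Suc: "pderiv (ypoly ^ Suc m) = - ([:real (Suc m):] * ypoly ^ m)"
  by (simp del: power_Suc add: pderiv_power_Suc)

lemma ypoly_times_pderiv_ypoly_power: "ypoly * pderiv (ypoly ^ k) = - ([:real k:] * ypoly ^ k)"
proof (cases k)
  case (Suc m)
  then show ?thesis by (simp del: power_Suc add: pderiv_ypoly_power_Suc mult_ac) (simp add: mult_ac)
qed simp

lemma integral01_ypoly_power_xpoly:
  "integral01 (ypoly ^ k * xpoly) = 1 / (real k + 1) - 1 / (real k + 2)"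
proof -
  define F where "F = [:1 / (real k + 2):] * ypoly ^ Suc (Suc k) - [:1 / (real k + 1):] * ypoly ^ Suc k"
  have "pderiv F = ypoly ^ k - ypoly ^ k * ypoly"
    unfolding F_def pderiv_diff pderiv_mult pderiv_ypoly_power_Suc
    by (simp del: power_Suc add: mult.assoc[symmetric] one_pCons field_simps)
       (simp add: algebra_simps)
  also have "\<dots> = ypoly ^ k * xpoly" by (simp add: ypoly_def algebra_simps)
  finally have "integral01 (ypoly ^ k * xpoly) = poly F 1 - poly F 0"
    using integral01_pderiv[of F] by simp
  then show ?thesis unfolding F_def by simp
qed

lemma integral01_ypoly_power_recurrence:
  "integral01 (ypoly ^ k * - (xpoly * pderiv (xpoly * ypoly * p))) =
     - (real k + 1) * integral01 (ypoly ^ (k + 2) * p) + (2 * real k + 1) * integral01 (ypoly ^ (k + 1) * p)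
     - real k * integral01 (ypoly ^ k * p)"
proof -
  define K where "K = [:real k:]"
  have "integral01 (ypoly ^ k * - (xpoly * pderiv (xpoly * ypoly * p)))
      = - integral01 ((ypoly ^ k * xpoly) * pderiv (xpoly * ypoly * p))"
    by (simp add: integral01_minus mult_ac)
  also have "\<dots> = integral01 (pderiv (ypoly ^ k * xpoly) * (xpoly * ypoly * p))"
    by (subst integral01_by_parts) simp
  also have "pderiv (ypoly ^ k * xpoly) * (xpoly * ypoly * p)
      = (K + K + 1) * (ypoly * (ypoly ^ k * p)) - (K + 1) * (ypoly * ypoly * (ypoly ^ k * p)) - K * (ypoly ^ k * p)"
  proof -
    have "pderiv (ypoly ^ k * xpoly) * (xpoly * ypoly * p)
        = (ypoly ^ k * xpoly * ypoly + xpoly * xpoly * (ypoly * pderiv (ypoly ^ k))) * p"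
      by (simp add: pderiv_mult algebra_simps)
    also have "\<dots> = (K + K + 1) * (ypoly * (ypoly ^ k * p)) - (K + 1) * (ypoly * ypoly * (ypoly ^ k * p)) - K * (ypoly ^ k * p)"
      unfolding ypoly_times_pderiv_ypoly_power K_def[symmetric]
      by (simp add: ypoly_def algebra_simps)
    finally show ?thesis .
  qed
  also have "integral01 \<dots> = (2 * real k + 1) * integral01 (ypoly ^ (k + 1) * p)
      - (real k + 1) * integral01 (ypoly ^ (k + 2) * p) - real k * integral01 (ypoly ^ k * p)"
    by (simp only: distrib_right mult_1_left integral01_add integral01_diff K_def integral01_const_mult)
       (simp add: algebra_simps)
  finally show ?thesis by (simp add: algebra_simps)
qed

definition Dx :: "real poly \<Rightarrow> real poly" where
  "Dx p = (xpoly ^ 3 - xpoly ^ 2) * pderiv p"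

lemma f_eq_integral01:
  "f (Suc n) k = integral01 (ypoly ^ k * - (xpoly * pderiv ((Dx ^^ n) xpoly)))"
proof (induction n arbitrary: k)
  case 0
  show ?case
    using integral01_ypoly_power_xpoly[of k] by (simp add: integral01_minus field_simps)
next
  case (Suc n)
  have "(Dx ^^ Suc n) xpoly = xpoly * ypoly * - (xpoly * pderiv ((Dx ^^ n) xpoly))"
    by (simp add: Dx_def ypoly_def algebra_simps power2_eq_square power3_eq_cube)
  then show ?case
    using integral01_ypoly_power_recurrence[of k "- (xpoly * pderiv ((Dx ^^ n) xpoly))"]
      Suc.IH[of k] Suc.IH[of "k + 1"] Suc.IH[of "k + 2"]
    by simp
qed

lemma f_at_0_eq_integral01: "f (Suc (Suc n)) 0 = integral01 ((Dx ^^ Suc n) xpoly)"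
proof -
  define q where "q = (Dx ^^ Suc n) xpoly"
  have "poly q 1 = 0" by (simp add: q_def Dx_def)
  have "f (Suc (Suc n)) 0 = - integral01 (xpoly * pderiv q)"
    using f_eq_integral01[of "Suc n" 0] by (simp add: q_def integral01_minus)
  also have "\<dots> = integral01 q"
    using \<open>poly q 1 = 0\<close> by (simp add: integral01_by_parts)
  finally show ?thesis by (simp add: q_def)
qed

lemma integral01_xpoly_power_Dx:
  "integral01 (xpoly ^ k * Dx q) =
     (real k + 2) * integral01 (xpoly ^ (k + 1) * q) - (real k + 3) * integral01 (xpoly ^ (k + 2) * q)"
proof -
  have "xpoly ^ k * Dx q = (xpoly ^ Suc (Suc (Suc k)) - xpoly ^ Suc (Suc k)) * pderiv q"
    by (simp add: Dx_def algebra_simps power2_eq_square power3_eq_cube)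
  then have "integral01 (xpoly ^ k * Dx q)
      = - integral01 (pderiv (xpoly ^ Suc (Suc (Suc k)) - xpoly ^ Suc (Suc k)) * q)"
    by (simp add: integral01_by_parts)
  also have "\<dots> = - integral01 ([:real (k + 3):] * (xpoly ^ (k + 2) * q) - [:real (k + 2):] * (xpoly ^ (k + 1) * q))"
    unfolding pderiv_diff pderiv_xpoly_power_Suc by (simp add: algebra_simps)
  also have "\<dots> = (real k + 2) * integral01 (xpoly ^ (k + 1) * q) - (real k + 3) * integral01 (xpoly ^ (k + 2) * q)"
    by (simp only: integral01_minus integral01_diff integral01_const_mult) (simp add: algebra_simps)
  finally show ?thesis .
qed

definition fps_pderiv :: "'a::idom poly fps \<Rightarrow> 'a poly fps" where
  "fps_pderiv F = Abs_fps (\<lambda>n. pderiv (fps_nth F n))"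

definition fps_poly_eval :: "'a::idom \<Rightarrow> 'a poly fps \<Rightarrow> 'a fps" where
  "fps_poly_eval a F = Abs_fps (\<lambda>n. poly (fps_nth F n) a)"

definition fps_integral01 :: "real poly fps \<Rightarrow> real fps" where
  "fps_integral01 F = Abs_fps (\<lambda>n. integral01 (fps_nth F n))"

lemma fps_pderiv_nth [simp]: "fps_nth (fps_pderiv F) n = pderiv (fps_nth F n)"
  by (simp add: fps_pderiv_def)

lemma fps_poly_eval_nth [simp]: "fps_nth (fps_poly_eval a F) n = poly (fps_nth F n) a"
  by (simp add: fps_poly_eval_def)

lemma fps_integral01_nth [simp]: "fps_nth (fps_integral01 F) n = integral01 (fps_nth F n)"
  by (simp add: fps_integral01_def)

lemma fps_pderiv_add [simp]: "fps_pderiv (F + G) = fps_pderiv F + fps_pderiv G"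
  by (simp add: fps_eq_iff pderiv_add)

lemma fps_pderiv_diff [simp]: "fps_pderiv (F - G) = fps_pderiv F - fps_pderiv G"
  by (simp add: fps_eq_iff pderiv_diff)

lemma fps_pderiv_const [simp]: "fps_pderiv (fps_const p) = fps_const (pderiv p)"
  by (simp add: fps_eq_iff)

lemma fps_pderiv_1 [simp]: "fps_pderiv 1 = 0"
  by (simp add: fps_eq_iff)

lemma fps_pderiv_mult [simp]: "fps_pderiv (F * G) = fps_pderiv F * G + F * fps_pderiv G"
proof (rule fps_ext)
  fix n
  have "pderiv (\<Sum>i=0..n. fps_nth F i * fps_nth G (n - i))
      = (\<Sum>i=0..n. pderiv (fps_nth F i) * fps_nth G (n - i) + fps_nth F i * pderiv (fps_nth G (n - i)))"
    using higher_pderiv_sum[of 1 "\<lambda>i. fps_nth F i * fps_nth G (n - i)" "{0..n}"]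
    by (simp add: pderiv_mult add.commute mult.commute)
  then show "fps_nth (fps_pderiv (F * G)) n = fps_nth (fps_pderiv F * G + F * fps_pderiv G) n"
    by (simp add: fps_mult_nth sum.distrib)
qed

lemma fps_pderiv_power: "fps_pderiv (F ^ k) = of_nat k * F ^ (k - 1) * fps_pderiv F"
proof (induction k)
  case (Suc k)
  then show ?case by (cases k) (simp_all add: algebra_simps)
qed simp

lemma fps_pderiv_fps_deriv: "fps_pderiv (fps_deriv F) = fps_deriv (fps_pderiv F)"
  by (simp add: fps_eq_iff pderiv_mult pderiv_add)

lemma fps_poly_eval_add [simp]: "fps_poly_eval a (F + G) = fps_poly_eval a F + fps_poly_eval a G"
  by (simp add: fps_eq_iff)

lemma fps_poly_eval_diff [simp]: "fps_poly_eval a (F - G) = fps_poly_eval a F - fps_poly_eval a G"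
  by (simp add: fps_eq_iff)

lemma fps_poly_eval_mult [simp]: "fps_poly_eval a (F * G) = fps_poly_eval a F * fps_poly_eval a G"
  by (simp add: fps_eq_iff fps_mult_nth poly_sum)

lemma fps_poly_eval_const [simp]: "fps_poly_eval a (fps_const p) = fps_const (poly p a)"
  by (simp add: fps_eq_iff)

lemma fps_poly_eval_1 [simp]: "fps_poly_eval a 1 = 1"
  by (simp add: fps_eq_iff)

lemma fps_poly_eval_X [simp]: "fps_poly_eval a fps_X = fps_X"
  by (simp add: fps_eq_iff fps_X_def)

lemma fps_poly_eval_power [simp]: "fps_poly_eval a (F ^ k) = fps_poly_eval a F ^ k"
  by (induction k) simp_all

lemma fps_poly_eval_fps_deriv: "fps_poly_eval a (fps_deriv F) = fps_deriv (fps_poly_eval a F)"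
  by (simp add: fps_eq_iff)

lemma fps_integral01_add: "fps_integral01 (F + G) = fps_integral01 F + fps_integral01 G"
  by (simp add: fps_eq_iff integral01_add)

lemma fps_integral01_diff: "fps_integral01 (F - G) = fps_integral01 F - fps_integral01 G"
  by (simp add: fps_eq_iff integral01_diff)

lemma fps_integral01_of_nat_mult: "fps_integral01 (of_nat m * F) = of_nat m * fps_integral01 F"
  by (simp flip: fps_of_nat add: fps_eq_iff of_nat_poly integral01_smult)

lemma fps_integral01_fps_deriv: "fps_integral01 (fps_deriv F) = fps_deriv (fps_integral01 F)"
  by (simp add: fps_eq_iff of_nat_poly integral01_smult)

lemma fps_integral01_fps_pderiv:
  "fps_integral01 (fps_pderiv F) = fps_poly_eval 1 F - fps_poly_eval 0 F"
  by (simp add: fps_eq_iff integral01_pderiv)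

lemma derivation_right_inverse:
  fixes D :: "'a::comm_ring_1 \<Rightarrow> 'a"
  assumes "P * I = 1" and "D (P * I) = D P * I + P * D I" and "D 1 = 0"
  shows "D I = - D P * I ^ 2"
proof -
  have "(D P * I + P * D I) * I = 0" using assms by simp
  then have "D P * I * I + (P * I) * D I = 0" by (simp add: algebra_simps)
  then show ?thesis using assms(1) by (simp add: power2_eq_square eq_neg_iff_add_eq_0 add.commute mult.assoc)
qed

text \<open>Series in t with coefficients polynomial in w: W = w, E0 = e^(wt), E1 = (e^(wt) - 1)/t, E2 = (e^(wt) - 1 - wt)/t^2.\<close>
definition W :: "real poly fps" where "W = fps_const xpoly"
definition E0 :: "real poly fps" where "E0 = Abs_fps (\<lambda>n. monom (1 / fact n) n)"
definition E1 :: "real poly fps" where "E1 = Abs_fps (\<lambda>n. monom (1 / fact (Suc n)) (Suc n))"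
definition E2 :: "real poly fps" where "E2 = Abs_fps (\<lambda>n. monom (1 / fact (Suc (Suc n))) (Suc (Suc n)))"

lemma xpoly_eq_monom: "xpoly = monom 1 1"
  by (simp add: xpoly_def monom_Suc monom_0)

lemma of_nat_Suc_times_inverse_fact: "of_nat (Suc m) * (1 / fact (Suc m) :: real) = 1 / fact m"
  by (simp del: of_nat_Suc)

lemma E0_eq: "E0 = 1 + fps_X * E1"
proof (rule fps_ext)
  fix n show "fps_nth E0 n = fps_nth (1 + fps_X * E1) n"
    by (cases n) (simp_all add: E0_def E1_def monom_0 one_pCons)
qed

lemma E1_eq: "E1 = W + fps_X * E2"
proof (rule fps_ext)
  fix n show "fps_nth E1 n = fps_nth (W + fps_X * E2) n"
    by (cases n) (simp_all add: W_def E1_def E2_def xpoly_eq_monom)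
qed

lemma fps_pderiv_W [simp]: "fps_pderiv W = 1"
  by (simp add: W_def)

lemma fps_pderiv_E0: "fps_pderiv E0 = fps_X * E0"
proof (rule fps_ext)
  fix n show "fps_nth (fps_pderiv E0) n = fps_nth (fps_X * E0) n"
    by (cases n) (simp_all add: E0_def pderiv_monom of_nat_Suc_times_inverse_fact del: of_nat_Suc)
qed

lemma fps_pderiv_E1: "fps_pderiv E1 = E0"
  by (rule fps_ext) (simp add: E0_def E1_def pderiv_monom of_nat_Suc_times_inverse_fact del: of_nat_Suc)

lemma fps_pderiv_E2: "fps_pderiv E2 = E1"
  by (rule fps_ext) (simp add: E1_def E2_def pderiv_monom of_nat_Suc_times_inverse_fact del: of_nat_Suc)

lemma fps_deriv_W [simp]: "fps_deriv W = 0"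
  by (simp add: W_def)

lemma fps_deriv_E0: "fps_deriv E0 = W * E0"
proof (rule fps_ext)
  fix n
  have "(of_nat (Suc n) :: real poly) * monom (1 / fact (Suc n)) (Suc n) = monom (1 / fact n) (Suc n)"
    by (simp add: of_nat_poly smult_monom of_nat_Suc_times_inverse_fact del: of_nat_Suc)
  also have "\<dots> = xpoly * monom (1 / fact n) n"
    by (simp add: xpoly_eq_monom mult_monom)
  finally show "fps_nth (fps_deriv E0) n = fps_nth (W * E0) n"
    by (simp add: E0_def W_def del: of_nat_Suc)
qed

lemma X_times_fps_deriv_E1: "fps_X * fps_deriv E1 = W * E0 - E1"
proof -
  have "fps_deriv E0 = fps_X * fps_deriv E1 + E1"
    by (subst E0_eq) simp
  then show ?thesis using fps_deriv_E0 by simp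
qed

lemma fps_poly_eval_0_E1: "fps_poly_eval 0 E1 = 0"
  by (rule fps_ext) (simp add: E1_def poly_monom)

lemma fps_poly_eval_0_E2: "fps_poly_eval 0 E2 = 0"
  by (rule fps_ext) (simp add: E2_def poly_monom)

lemma fps_poly_eval_1_W: "fps_poly_eval 1 W = 1"
  by (simp add: W_def)

lemma fps_poly_eval_1_E0: "fps_poly_eval 1 E0 = fps_exp 1"
  by (rule fps_ext) (simp add: E0_def poly_monom)

definition denU :: "real poly fps" where "denU = E1 + (1 - W)"
definition denZ :: "real poly fps" where "denZ = E1 + (1 - W) * E0"
definition invU :: "real poly fps" where "invU = fps_right_inverse denU 1"
definition invZ :: "real poly fps" where "invZ = fps_right_inverse denZ 1"

definition U :: "real poly fps" where "U = E1 * invU"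
definition Z :: "real poly fps" where "Z = E1 * invZ"

lemma denU_invU: "denU * invU = 1"
  unfolding invU_def
  by (rule fps_right_inverse) (simp add: denU_def E1_def W_def xpoly_eq_monom)

lemma denZ_invZ: "denZ * invZ = 1"
  unfolding invZ_def
  by (rule fps_right_inverse) (simp add: denZ_def E0_def E1_def W_def xpoly_eq_monom monom_0 one_pCons)

lemma fps_pderiv_invU: "fps_pderiv invU = - (E0 - 1) * invU ^ 2"
proof -
  have "fps_pderiv invU = - fps_pderiv denU * invU ^ 2"
    by (rule derivation_right_inverse[OF denU_invU]) simp_all
  then show ?thesis by (simp add: denU_def fps_pderiv_E1)
qed

lemma fps_pderiv_U: "fps_pderiv U = E0 * invU - E1 * (E0 - 1) * invU ^ 2"
  unfolding U_def fps_pderiv_mult fps_pderiv_E1 fps_pderiv_invU by (simp add: algebra_simps)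

lemma fps_deriv_U: "fps_deriv U = fps_deriv E1 * invU - E1 * fps_deriv E1 * invU ^ 2"
proof -
  have "fps_deriv invU = - fps_deriv denU * invU ^ 2"
    by (rule derivation_right_inverse[OF denU_invU]) (simp_all add: algebra_simps)
  also have "\<dots> = - fps_deriv E1 * invU ^ 2"
    by (simp add: denU_def)
  finally have inv: "fps_deriv invU = \<dots>" .
  show ?thesis unfolding U_def fps_deriv_mult inv by (simp add: algebra_simps)
qed

lemma fps_pderiv_Z: "fps_pderiv Z = E0 * invZ - E1 * ((1 - W) * fps_X * E0) * invZ ^ 2"
proof -
  have "fps_pderiv invZ = - fps_pderiv denZ * invZ ^ 2"
    by (rule derivation_right_inverse[OF denZ_invZ]) simp_all
  also have "\<dots> = - ((1 - W) * fps_X * E0) * invZ ^ 2"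
    by (simp add: denZ_def fps_pderiv_E0 fps_pderiv_E1 algebra_simps)
  finally have inv: "fps_pderiv invZ = \<dots>" .
  show ?thesis unfolding Z_def fps_pderiv_mult fps_pderiv_E1 inv by (simp add: algebra_simps)
qed

lemma fps_deriv_Z: "fps_deriv Z = fps_deriv E1 * invZ - E1 * (fps_deriv E1 + (1 - W) * W * E0) * invZ ^ 2"
proof -
  have "fps_deriv invZ = - fps_deriv denZ * invZ ^ 2"
    by (rule derivation_right_inverse[OF denZ_invZ]) (simp_all add: algebra_simps)
  also have "\<dots> = - (fps_deriv E1 + (1 - W) * W * E0) * invZ ^ 2"
    by (simp add: denZ_def fps_deriv_E0 algebra_simps)
  finally have inv: "fps_deriv invZ = \<dots>" .
  show ?thesis unfolding Z_def fps_deriv_mult inv by (simp add: algebra_simps)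
qed

lemma U_Z_pde_identity:
  fixes t w e0 e1 d iu iz :: "'a::idom"
  assumes "e0 = 1 + t * e1" and "t * d = w * e0 - e1"
    and "(e1 + (1 - w)) * iu = 1" and "(e1 + (1 - w) * e0) * iz = 1"
  shows "t * ((d * iz - e1 * (d + (1 - w) * w * e0) * iz ^ 2) * (e0 * iu - e1 * (e0 - 1) * iu ^ 2))
       = t * ((e0 * iz - e1 * ((1 - w) * t * e0) * iz ^ 2) *
              (d * iu - e1 * d * iu ^ 2 + (e1 * iu) ^ 3 - (e1 * iu) ^ 2))"
  using assms by algebra

lemma U_Z_pde: "fps_deriv Z * fps_pderiv U = fps_pderiv Z * (fps_deriv U + U ^ 3 - U ^ 2)"
proof -
  have "fps_X * (fps_deriv Z * fps_pderiv U) = fps_X * (fps_pderiv Z * (fps_deriv U + U ^ 3 - U ^ 2))"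
    unfolding fps_deriv_Z fps_pderiv_U fps_pderiv_Z fps_deriv_U
    unfolding U_def
    using denU_invU denZ_invZ unfolding denU_def denZ_def
    by (rule U_Z_pde_identity[OF E0_eq X_times_fps_deriv_E1])
  then show ?thesis by simp
qed

lemma Z_times_pderiv_U_identity:
  fixes t w e0 e1 e2 iu iz :: "'a::idom"
  assumes "e0 = 1 + t * e1" and "e1 = w + t * e2"
    and "(e1 + (1 - w)) * iu = 1" and "(e1 + (1 - w) * e0) * iz = 1"
  shows "e1 * iu - e2 * (e0 - 1) * iu ^ 2 = e1 * iz * (e0 * iu - e1 * (e0 - 1) * iu ^ 2)"
  using assms by algebra

text \<open>So the w-integral of Z dU/dw reduces to boundary values at w = 0, 1; this is how e^t enters.\<close>
lemma Z_times_pderiv_U: "Z * fps_pderiv U = fps_pderiv (E2 * invU)"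
proof -
  have "fps_pderiv (E2 * invU) = E1 * invU - E2 * (E0 - 1) * invU ^ 2"
    unfolding fps_pderiv_mult fps_pderiv_E2 fps_pderiv_invU by (simp add: algebra_simps)
  also have "\<dots> = E1 * invZ * (E0 * invU - E1 * (E0 - 1) * invU ^ 2)"
    using denU_invU denZ_invZ unfolding denU_def denZ_def
    by (rule Z_times_pderiv_U_identity[OF E0_eq E1_eq])
  finally show ?thesis by (simp add: Z_def fps_pderiv_U)
qed

lemma fps_deriv_moment_integrand:
  "fps_deriv (U ^ k * Z * fps_pderiv U) =
     fps_pderiv (U ^ k * (fps_deriv U + U ^ 3 - U ^ 2) * Z)
     - (of_nat (k + 3) * U ^ (k + 2) - of_nat (k + 2) * U ^ (k + 1)) * Z * fps_pderiv U"
proof -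
  define S where "S = fps_deriv U + U ^ 3 - U ^ 2"
  have pderiv_S: "fps_pderiv S = fps_deriv (fps_pderiv U) + 3 * U ^ 2 * fps_pderiv U - 2 * U * fps_pderiv U"
    using fps_pderiv_power[of U 3] fps_pderiv_power[of U 2]
    by (simp add: S_def fps_pderiv_fps_deriv)
  have pde: "fps_deriv Z * fps_pderiv U = fps_pderiv Z * S"
    using U_Z_pde by (simp add: S_def)
  have lhs: "fps_deriv (U ^ k * Z * fps_pderiv U)
      = of_nat k * fps_deriv U * U ^ (k - 1) * Z * fps_pderiv U
        + U ^ k * (fps_deriv Z * fps_pderiv U) + U ^ k * Z * fps_deriv (fps_pderiv U)"
    by (simp add: fps_deriv_power' algebra_simps)
  have rhs: "fps_pderiv (U ^ k * S * Z)
      = of_nat k * U ^ (k - 1) * fps_pderiv U * S * Z + U ^ k * fps_pderiv S * Z + U ^ k * (fps_pderiv Z * S)"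
    by (simp add: fps_pderiv_power algebra_simps)
  have power_shift: "of_nat k * U ^ (k - 1) * (U ^ 3 - U ^ 2) + U ^ k * (3 * U ^ 2 - 2 * U)
      = of_nat (k + 3) * U ^ (k + 2) - of_nat (k + 2) * U ^ (k + 1)"
    by (cases k) (simp_all add: algebra_simps power2_eq_square power3_eq_cube)
  have "fps_pderiv (U ^ k * S * Z) - fps_deriv (U ^ k * Z * fps_pderiv U)
      = (of_nat k * U ^ (k - 1) * (S - fps_deriv U) + U ^ k * (3 * U ^ 2 - 2 * U)) * Z * fps_pderiv U"
    unfolding lhs rhs pderiv_S pde by (simp add: algebra_simps)
  also have "S - fps_deriv U = U ^ 3 - U ^ 2"
    by (simp add: S_def)
  also note power_shift
  finally show ?thesis by (simp add: S_def algebra_simps)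
qed

lemma fps_poly_eval_0_U: "fps_poly_eval 0 U = 0"
  by (simp add: U_def fps_poly_eval_0_E1)

lemma fps_poly_eval_1_E1_invU: "fps_poly_eval 1 E1 * fps_poly_eval 1 invU = 1"
  using arg_cong[OF denU_invU, of "fps_poly_eval 1"] by (simp add: denU_def fps_poly_eval_1_W)

lemma fps_poly_eval_1_U: "fps_poly_eval 1 U = 1"
  by (simp add: U_def fps_poly_eval_1_E1_invU)

definition moment_series :: "nat \<Rightarrow> real fps" where
  "moment_series k = fps_integral01 (U ^ k * Z * fps_pderiv U)"

text \<open>The boundary term vanishes because U is 0 at w = 0 and 1 at w = 1, independently of t.\<close>
lemma fps_deriv_moment_series:
  "fps_deriv (moment_series k) = of_nat (k + 2) * moment_series (k + 1) - of_nat (k + 3) * moment_series (k + 2)"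
proof -
  have boundary: "fps_poly_eval 0 (U ^ k * (fps_deriv U + U ^ 3 - U ^ 2) * Z) = 0"
      "fps_poly_eval 1 (U ^ k * (fps_deriv U + U ^ 3 - U ^ 2) * Z) = 0"
    by (simp_all add: fps_poly_eval_fps_deriv fps_poly_eval_0_U fps_poly_eval_1_U)
  have "fps_deriv (moment_series k) = fps_integral01 (fps_deriv (U ^ k * Z * fps_pderiv U))"
    by (simp only: moment_series_def fps_integral01_fps_deriv)
  also have "\<dots> = fps_integral01 (fps_pderiv (U ^ k * (fps_deriv U + U ^ 3 - U ^ 2) * Z))
      - fps_integral01 (of_nat (k + 3) * (U ^ (k + 2) * Z * fps_pderiv U))
      + fps_integral01 (of_nat (k + 2) * (U ^ (k + 1) * Z * fps_pderiv U))"
    unfolding fps_deriv_moment_integrand by (simp add: algebra_simps fps_integral01_add fps_integral01_diff)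
  also have "\<dots> = of_nat (k + 2) * moment_series (k + 1) - of_nat (k + 3) * moment_series (k + 2)"
    unfolding fps_integral01_fps_pderiv fps_integral01_of_nat_mult boundary moment_series_def by simp
  finally show ?thesis .
qed

lemma fps_nth_moment_series:
  "fps_nth (moment_series k) n = integral01 (xpoly ^ k * (Dx ^^ n) xpoly) / fact n"
proof (induction n arbitrary: k)
  case 0
  have "fps_nth U 0 = xpoly" "fps_nth Z 0 = xpoly" "fps_nth (fps_pderiv U) 0 = 1"
    by (simp_all add: U_def Z_def invU_def invZ_def E1_def xpoly_eq_monom pderiv_monom)
  then show ?case by (simp add: moment_series_def fps_nth_power_0)
next
  case (Suc n)
  have "of_nat (Suc n) * fps_nth (moment_series k) (Suc n) = fps_nth (fps_deriv (moment_series k)) n"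
    by simp
  also have "\<dots> = real (k + 2) * fps_nth (moment_series (k + 1)) n - real (k + 3) * fps_nth (moment_series (k + 2)) n"
    by (simp flip: fps_of_nat add: fps_deriv_moment_series)
  also have "\<dots> = integral01 (xpoly ^ k * (Dx ^^ Suc n) xpoly) / fact n"
    using Suc.IH by (simp add: integral01_xpoly_power_Dx diff_divide_distrib)
  finally show ?case by (simp add: field_simps del: of_nat_Suc)
qed

lemma X_times_moment_series_0: "fps_X * moment_series 0 = 1 - fps_X / (fps_exp 1 - 1)"
proof -
  define e1 e2 iu where "e1 = fps_poly_eval 1 E1" and "e2 = fps_poly_eval 1 E2" and "iu = fps_poly_eval 1 invU"
  have "fps_nth (fps_exp 1 - 1 :: real fps) 1 = 1"
    by simp
  then have "fps_exp 1 - 1 \<noteq> (0 :: real fps)"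
    by auto
  moreover have "subdegree (fps_exp 1 - 1 :: real fps) \<le> subdegree (fps_X :: real fps)"
    by (simp add: subdegree_leI)
  ultimately have G: "fps_X / (fps_exp 1 - 1) * (fps_exp 1 - 1) = (fps_X :: real fps)"
    by (rule fps_times_divide_eq)
  have "moment_series 0 = e2 * iu"
    unfolding moment_series_def power_0 mult_1_left Z_times_pderiv_U fps_integral01_fps_pderiv
    by (simp add: fps_poly_eval_0_E2 e2_def iu_def)
  moreover have "fps_exp 1 = 1 + fps_X * e1" and "e1 = 1 + fps_X * e2"
    using arg_cong[OF E0_eq, of "fps_poly_eval 1"] arg_cong[OF E1_eq, of "fps_poly_eval 1"]
    by (simp_all add: fps_poly_eval_1_E0 fps_poly_eval_1_W e1_def e2_def)
  moreover have "e1 * iu = 1"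
    using fps_poly_eval_1_E1_invU by (simp add: e1_def iu_def)
  ultimately have "(fps_X * moment_series 0) * (fps_exp 1 - 1) = (1 - fps_X / (fps_exp 1 - 1)) * (fps_exp 1 - 1)"
    using G by algebra
  with \<open>fps_exp 1 - 1 \<noteq> 0\<close> show ?thesis by simp
qed

theorem propositionC1:
  fixes n :: nat
  assumes "n \<ge> 2"
  shows "f n 0 = - bernoulli n / real n"
proof -
  obtain m where n: "n = Suc (Suc m)"
    using assms by (metis add_2_eq_Suc le_Suc_ex)
  have "fps_nth (fps_X * moment_series 0) n = fps_nth (1 - fps_X / (fps_exp 1 - 1)) n"
    by (simp add: X_times_moment_series_0)
  then have "integral01 ((Dx ^^ Suc m) xpoly) / fact (Suc m) = - bernoulli n / fact n"
    by (simp add: n bernoulli_def fps_nth_moment_series)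
  moreover have "(fact n :: real) = real n * fact (Suc m)"
    by (simp add: n del: of_nat_Suc)
  ultimately show ?thesis
    by (simp add: n f_at_0_eq_integral01 field_simps del: f.simps of_nat_Suc)
qed

end
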